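(* Let $q$ be a prime power, let $n_1,n_2,m\ge1$ and $k_1,k_2$ be integers such that for $i=1,2$, $k_i^m\equiv 1\pmod{n_i}$ and $k_i^t\not\equiv 1\pmod{n_i}$ for $1\le t\le m-1$, and let $$G_2=(C_{n_1}\times C_{n_2})\rtimes C_m=\langle x,y,z\mid x^{n_1}=y^{n_2}=z^m=1,\ xy=yx,\ z^{-1}xz=x^{k_1},\ z^{-1}yz=y^{k_2}\rangle .$$ Order the $n_1n_2m$ elements of $G_2$ so that $z^iy^jx^k$ ($0\le k\le n_1-1$, $0\le j\le n_2-1$, $0\le i\le m-1$) is in position $1+k+n_1j+n_1n_2i$, and identify $\mathbb{F}_qG_2$ with $\mathbb{F}_q^{n_1n_2m}$ via $\Psi$ with respect to this ordering. Let $v\in\mathbb{F}_qG_2$ and let $C(v)$ be the code generated by the rows of $\sigma_{G_2}(v)$. Suppose $(b_1,\dots,b_{n_1n_2m})\in C(v)$. For $0\le i\le m-1$ and $0\le j\le n_2-1$ define $$\mathbf{b}_{j+1}'^{(i+1)}=(b_{in_1n_2+jn_1+1},b_{in_1n_2+jn_1+2},\dots,b_{in_1n_2+(j+1)n_1}),\qquad \mathbf{b}_{j+1}^{(i+1)}=T_{n_1}^{[k_1^i]_{n_1}}\big(\mathbf{b}_{j+1}'^{(i+1)}\big),$$ $$\widetilde{\mathbf{b}_{i+1}}=(\mathbf{b}_1^{(i+1)},\dots,\mathbf{b}_{n_2}^{(i+1)}),\qquad \widetilde{\mathbf{b}_{i+1}'}=T_{n_2}^{[k_2^i]_{n_2}}\big(\mathbf{b}_1'^{(i+1)},\dots,\mathbf{b}_{n_2}'^{(i+1)}\big),$$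 $$\widetilde{\mathbf{b}_{i+1}''}=(b_{1+n_1n_2i},b_{2+n_1n_2i},\dots,b_{n_1n_2(i+1)}),$$ where $T_{n_2}$ acts on the $n_2$-tuple of blocks. Then the concatenations $(\widetilde{\mathbf{b}_1},\dots,\widetilde{\mathbf{b}_m})$, $(\widetilde{\mathbf{b}_1'},\dots,\widetilde{\mathbf{b}_m'})$ and $T_m(\widetilde{\mathbf{b}_1''},\dots,\widetilde{\mathbf{b}_m''})$ are also codewords of $C(v)$.
   Context: For a finite group $G=\{g_1,\dots,g_N\}$ with a fixed ordering, $\mathbb{F}_qG$ is the group ring, and $\Psi:\mathbb{F}_qG\to\mathbb{F}_q^N$ sends $v=\sum_{i}\alpha_{g_i}g_i$ to $(\alpha_{g_1},\dots,\alpha_{g_N})$. The group ring matrix $\sigma_G(v)$ is the $N\times N$ matrix whose $(i,j)$ entry is $\alpha_{g_i^{-1}g_j}$; $C(v)$ denotes the row space of $\sigma_G(v)$. For a tuple $(c_1,\dots,c_r)$ (of scalars or of vectors), $T_r(c_1,\dots,c_r)=(c_r,c_1,\dots,c_{r-1})$ is the cyclic shift, and $T_r^s$ is its $s$-th iterate. For integers $a$ and $n\ge1$, $[a]_n$ denotes the smallest positive integer $a'$ with $a\equiv a'\pmod n$. *)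

theory Defs
  imports "HOL-Algebra.Group" "HOL-Number_Theory.Cong"
begin

text \<open>Elements z^i y^j x^k of G_2 = (C_n1 x C_n2) \<rtimes> C_m are represented by
  triples (i,j,k) with 0 \<le> i < m, 0 \<le> j < n2, 0 \<le> k < n1.  Using the relations
  x z = z x^k1 and y z = z y^k2 one gets
  (z^i y^j x^k)(z^i' y^j' x^k') = z^(i+i') y^(j k2^i' + j') x^(k k1^i' + k').\<close>

definition G2_mult :: "nat \<Rightarrow> nat \<Rightarrow> nat \<Rightarrow> int \<Rightarrow> int \<Rightarrow> int \<times> int \<times> int \<Rightarrow> int \<times> int \<times> int \<Rightarrow> int \<times> int \<times> int" where
  "G2_mult n1 n2 m k1 k2 a b = (case a of (i, j, k) \<Rightarrow> case b of (i', j', k') \<Rightarrow>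
     ((i + i') mod int m, (j * k2 ^ nat i' + j') mod int n2, (k * k1 ^ nat i' + k') mod int n1))"

definition G2_carrier :: "nat \<Rightarrow> nat \<Rightarrow> nat \<Rightarrow> (int \<times> int \<times> int) set" where
  "G2_carrier n1 n2 m = {(i, j, k). 0 \<le> i \<and> i < int m \<and> 0 \<le> j \<and> j < int n2 \<and> 0 \<le> k \<and> k < int n1}"

definition G2 :: "nat \<Rightarrow> nat \<Rightarrow> nat \<Rightarrow> int \<Rightarrow> int \<Rightarrow> (int \<times> int \<times> int) monoid" where
  "G2 n1 n2 m k1 k2 = \<lparr>carrier = G2_carrier n1 n2 m, monoid.mult = G2_mult n1 n2 m k1 k2, one = (0, 0, 0)\<rparr>"

text \<open>The fixed ordering: the element z^i y^j x^k is at (0-based) position k + n1 j + n1 n2 i.\<close>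
definition G2_elem :: "nat \<Rightarrow> nat \<Rightarrow> nat \<Rightarrow> int \<times> int \<times> int" where
  "G2_elem n1 n2 p = (int (p div (n1 * n2)), int ((p div n1) mod n2), int (p mod n1))"

text \<open>Group ring matrix sigma_G(v): entry (r,c) is alpha(g_r^{-1} g_c); v is given by
  its coefficient function alpha, g enumerates the group (0-based), N = |G|.\<close>
definition grm :: "('g, 'b) monoid_scheme \<Rightarrow> (nat \<Rightarrow> 'g) \<Rightarrow> ('g \<Rightarrow> 'a) \<Rightarrow> nat \<Rightarrow> nat \<Rightarrow> 'a" where
  "grm G g alpha r c = alpha (inv\<^bsub>G\<^esub> (g r) \<otimes>\<^bsub>G\<^esub> g c)"

definition code :: "('g, 'b) monoid_scheme \<Rightarrow> (nat \<Rightarrow> 'g) \<Rightarrow> nat \<Rightarrow> ('g \<Rightarrow> 'a::field) \<Rightarrow> 'a list set" where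
  "code G g N alpha = {map (\<lambda>c. \<Sum>r<N. lam r * grm G g alpha r c) [0..<N] | lam. True}"

definition T :: "'x list \<Rightarrow> 'x list" where
  "T xs = (if xs = [] then [] else last xs # butlast xs)"

definition Tpow :: "nat \<Rightarrow> 'x list \<Rightarrow> 'x list" where
  "Tpow s = T ^^ s"

definition posmod :: "int \<Rightarrow> nat \<Rightarrow> nat" where
  "posmod a n = (LEAST a'. a' > 0 \<and> [a = int a'] (mod int n))"

end

theory Submission
  imports Defs
begin

text \<open>The code C(v) is stable under left translation: for u in G let sigma be the
  permutation of positions with g_(sigma c) = u g_c; replacing a codeword b by
  (b_(sigma c))_c only reindexes the rows of sigma_G(v) that b combines, since
  (u^-1 g_r)^-1 g_c = g_r^-1 u g_c.  In G_2 one computes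
  x^-1 z^i y^j x^k = z^i y^j x^(k - k1^i),  y^-1 z^i y^j x^k = z^i y^(j - k2^i) x^k  and
  z^-1 z^i y^j x^k = z^(i-1) y^j x^k,  while T^s moves the entry at index j - s to index j.
  As [k^i]_n is congruent to k^i modulo n, the three rearrangements in the theorem are
  exactly the left translations by x^-1, y^-1 and z^-1.\<close>

lemma cong_pow_exp_mod:
  fixes k :: int
  assumes "[k ^ m = 1] (mod n)"
  shows "[k ^ (a mod m) = k ^ a] (mod n)"
proof -
  have "[(k ^ m) ^ (a div m) * k ^ (a mod m) = 1 ^ (a div m) * k ^ (a mod m)] (mod n)"
    by (intro cong_mult cong_pow assms cong_refl)
  then show ?thesis
    by (simp add: cong_sym_eq flip: power_mult power_add)
qed

lemma twisted_mult_assoc: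
  fixes k :: int
  assumes "[k ^ m = 1] (mod int n)" and "0 \<le> i'" and "0 \<le> i''"
  shows "(((j * k ^ nat i' + j') mod int n) * k ^ nat i'' + j'') mod int n
       = (j * k ^ nat ((i' + i'') mod int m) + (j' * k ^ nat i'' + j'') mod int n) mod int n"
proof -
  have "[k ^ nat ((i' + i'') mod int m) = k ^ nat i' * k ^ nat i''] (mod int n)"
    using cong_pow_exp_mod[OF assms(1), of "nat i' + nat i''"] assms(2,3)
    by (simp add: nat_mod_distrib nat_add_distrib power_add)
  then have "[j * k ^ nat ((i' + i'') mod int m) + (j' * k ^ nat i'' + j'')
            = j * (k ^ nat i' * k ^ nat i'') + (j' * k ^ nat i'' + j'')] (mod int n)"
    by (intro cong_add cong_mult cong_refl)
  also have "j * (k ^ nat i' * k ^ nat i'') + (j' * k ^ nat i'' + j'')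
      = (j * k ^ nat i' + j') * k ^ nat i'' + j''"
    by (simp add: algebra_simps)
  finally have "[j * k ^ nat ((i' + i'') mod int m) + (j' * k ^ nat i'' + j'')
            = (j * k ^ nat i' + j') * k ^ nat i'' + j''] (mod int n)" .
  moreover have "((j * k ^ nat i' + j') mod int n * k ^ nat i'' + j'') mod int n
      = ((j * k ^ nat i' + j') * k ^ nat i'' + j'') mod int n"
    by (metis mod_add_left_eq mod_mult_left_eq)
  ultimately show ?thesis
    by (simp add: cong_def mod_simps)
qed

lemma twisted_mult_inverse:
  fixes k :: int
  assumes "[k ^ m = 1] (mod int n)" and "i \<le> m"
  shows "((- a * k ^ (m - i)) mod int n * k ^ i + a) mod int n = 0"
proof -
  have "((- a * k ^ (m - i)) mod int n * k ^ i + a) mod int n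
      = (- a * k ^ (m - i) * k ^ i + a) mod int n"
    by (metis mod_add_left_eq mod_mult_left_eq)
  also have "- a * k ^ (m - i) * k ^ i = - a * k ^ m"
    using assms(2) by (simp add: mult.assoc flip: power_add)
  also have "(- a * k ^ m + a) mod int n = (- a * 1 + a) mod int n"
    using assms(1) unfolding cong_def[symmetric] by (intro cong_add cong_mult cong_refl)
  finally show ?thesis
    by simp
qed

lemma cong_posmod:
  assumes "n \<ge> 1"
  shows "[int (posmod a n) = a] (mod int n)"
proof -
  have "nat (a mod int n) + n > 0 \<and> [a = int (nat (a mod int n) + n)] (mod int n)"
    using assms by (simp add: cong_def mod_add_right_eq)
  then have "posmod a n > 0 \<and> [a = int (posmod a n)] (mod int n)"
    unfolding posmod_def by (rule LeastI)
  then show ?thesis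
    by (simp add: cong_sym_eq)
qed

lemma mod_diff_posmod:
  assumes "n \<ge> 1"
  shows "((int n - 1) * a + c) mod int n = (c - int (posmod a n)) mod int n"
proof -
  have "[(int n - 1) * a + c = int n * a + (c - a)] (mod int n)"
    by (simp add: algebra_simps)
  also have "[int n * a + (c - a) = c - a] (mod int n)"
    by (simp add: cong_def)
  also have "[c - a = c - int (posmod a n)] (mod int n)"
    using cong_posmod[OF assms] by (intro cong_diff cong_refl) (rule cong_sym)
  finally show ?thesis
    unfolding cong_def .
qed

lemma mixed_radix_less:
  fixes j k a b :: nat
  assumes "j < b" and "k < a"
  shows "j * a + k < a * b"
proof -
  have "(j + 1) * a \<le> b * a"
    using assms(1) by (intro mult_le_mono1) simp
  then show ?thesis
    using assms(2) by (simp add: algebra_simps)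
qed

section \<open>Cyclic shifts and block lists\<close>

lemma T_rotate: "T xs = rotate (length xs - 1) xs"
proof (cases xs rule: rev_cases)
  case (snoc ys a)
  then show ?thesis by (simp add: T_def rotate_append)
qed (simp add: T_def)

lemma Tpow_rotate: "Tpow s xs = rotate (s * (length xs - 1)) xs"
  by (induction s) (simp_all add: Tpow_def T_rotate rotate_rotate)

lemma length_Tpow [simp]: "length (Tpow s xs) = length xs"
  by (simp add: Tpow_rotate)

lemma T_eq_Tpow_1: "T = Tpow 1"
  by (simp add: Tpow_def)

lemma nth_Tpow:
  assumes "j < length xs"
  shows "Tpow s xs ! j = xs ! nat ((int j - int s) mod int (length xs))"
proof -
  let ?n = "length xs"
  have "int (s * (?n - 1) + j) = int j - int s + int s * int ?n"
    using assms by (cases ?n) (simp_all add: algebra_simps)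
  then have "int ((s * (?n - 1) + j) mod ?n) = (int j - int s + int s * int ?n) mod int ?n"
    by (simp only: zmod_int)
  also have "\<dots> = (int j - int s) mod int ?n"
    by (rule mod_mult_self1)
  finally have "(s * (?n - 1) + j) mod ?n = nat ((int j - int s) mod int ?n)"
    by (metis nat_int)
  then show ?thesis
    using assms by (simp add: Tpow_rotate nth_rotate)
qed

lemma Tpow_map_upt:
  "Tpow s (map f [0..<n]) = map (\<lambda>j. f (nat ((int j - int s) mod int n))) [0..<n]"
  by (rule nth_equalityI) (auto simp: nth_Tpow nat_less_iff)

lemma length_concat_map_upt:
  assumes "\<And>i. i < m \<Longrightarrow> length (f i) = L"
  shows "length (concat (map f [0..<m])) = m * L"
  using assms by (induction m) auto

lemma nth_concat_map_upt:
  assumes "\<And>i. i < m \<Longrightarrow> length (f i) = L" and "i < m" and "k < L"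
  shows "concat (map f [0..<m]) ! (i * L + k) = f i ! k"
  using assms
proof (induction m)
  case (Suc m)
  have len: "length (concat (map f [0..<m])) = m * L"
    using Suc.prems(1) by (intro length_concat_map_upt) simp
  show ?case
  proof (cases "i < m")
    case True
    then have "i * L + k < m * L"
      using mixed_radix_less[OF True Suc.prems(3)] by (simp add: mult.commute)
    then show ?thesis
      using True Suc by (simp add: nth_append len)
  next
    case False
    then have "i = m"
      using Suc.prems(2) by simp
    then show ?thesis
      using Suc.prems(3) by (simp add: nth_append len)
  qed
qed simp

lemma take_drop_block:
  fixes b :: "'a list"
  assumes "length b = n1 * n2 * m" and "i < m" and "j < n2"
  shows "length (take n1 (drop (i * n1 * n2 + j * n1) b)) = n1"
    and "k < n1 \<Longrightarrow> take n1 (drop (i * n1 * n2 + j * n1) b) ! k = b ! (i * (n1 * n2) + (j * n1 + k))"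
proof -
  have "j * n1 + n1 \<le> n1 * n2"
    using assms(3) mult_le_mono1[of "Suc j" n2 n1] by (simp add: mult.commute)
  moreover have "i * (n1 * n2) + n1 * n2 \<le> n1 * n2 * m"
    using assms(2) mult_le_mono1[of "Suc i" m "n1 * n2"] by (simp add: mult.commute)
  ultimately have "i * n1 * n2 + j * n1 + n1 \<le> length b"
    using assms(1) by (simp add: mult.assoc)
  then show "length (take n1 (drop (i * n1 * n2 + j * n1) b)) = n1"
    and "k < n1 \<Longrightarrow> take n1 (drop (i * n1 * n2 + j * n1) b) ! k = b ! (i * (n1 * n2) + (j * n1 + k))"
    by (simp_all add: algebra_simps)
qed

section \<open>Group codes are closed under left translation\<close>

lemma length_code: "b \<in> code G g N \<alpha> \<Longrightarrow> length b = N"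
  by (auto simp: code_def)

lemma code_left_translation:
  fixes G (structure)
  assumes "group G" and g_inj: "inj_on g {..<N}" and g_carrier: "g ` {..<N} \<subseteq> carrier G"
    and u: "u \<in> carrier G"
    and \<sigma>: "\<And>c. c < N \<Longrightarrow> \<sigma> c < N \<and> g (\<sigma> c) = u \<otimes> g c"
    and b: "b \<in> code G g N \<alpha>"
  shows "map (\<lambda>c. b ! \<sigma> c) [0..<N] \<in> code G g N \<alpha>"
proof -
  interpret group G by fact
  obtain lam where b_eq: "b = map (\<lambda>c. \<Sum>r<N. lam r * grm G g \<alpha> r c) [0..<N]"
    using b unfolding code_def by blast
  have g_in: "g c \<in> carrier G" if "c < N" for c
    using g_carrier that by auto
  have "inj_on \<sigma> {..<N}"
  proof (rule inj_onI)
    fix c c' assume c: "c \<in> {..<N}" and c': "c' \<in> {..<N}" and eq: "\<sigma> c = \<sigma> c'"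
    have "u \<otimes> g c = u \<otimes> g c'"
      using \<sigma> c c' eq by (metis lessThan_iff)
    then have "g c = g c'"
      using u g_in c c' by simp
    then show "c = c'"
      by (rule inj_onD[OF g_inj _ c c'])
  qed
  moreover have "\<sigma> ` {..<N} \<subseteq> {..<N}"
    using \<sigma> by auto
  ultimately have \<sigma>_bij: "bij_betw \<sigma> {..<N} {..<N}"
    by (simp add: bij_betw_def endo_inj_surj)
  have translate: "inv (g (\<sigma> r)) \<otimes> g (\<sigma> c) = inv (g r) \<otimes> g c" if "r < N" "c < N" for r c
    using \<sigma>[OF that(1)] \<sigma>[OF that(2)] g_in[OF that(1)] g_in[OF that(2)] u
    by (simp add: inv_mult_group m_assoc) (simp add: m_assoc[symmetric])
  have "b ! \<sigma> c = (\<Sum>r<N. (lam \<circ> \<sigma>) r * grm G g \<alpha> r c)" if c: "c < N" for c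
  proof -
    have "b ! \<sigma> c = (\<Sum>r<N. lam r * grm G g \<alpha> r (\<sigma> c))"
      using \<sigma> c b_eq by simp
    also have "\<dots> = (\<Sum>r<N. lam (\<sigma> r) * grm G g \<alpha> (\<sigma> r) (\<sigma> c))"
      by (rule sum.reindex_bij_betw[OF \<sigma>_bij, symmetric])
    also have "\<dots> = (\<Sum>r<N. (lam \<circ> \<sigma>) r * grm G g \<alpha> r c)"
      using translate c by (simp add: grm_def)
    finally show ?thesis .
  qed
  then show ?thesis
    unfolding code_def by (auto intro!: exI[of _ "lam \<circ> \<sigma>"])
qed

section \<open>The group G_2\<close>

lemma G2_mult_simp [simp]:
  "(i, j, k) \<otimes>\<^bsub>G2 n1 n2 m k1 k2\<^esub> (i', j', k') =
     ((i + i') mod int m, (j * k2 ^ nat i' + j') mod int n2, (k * k1 ^ nat i' + k') mod int n1)"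
  by (simp add: G2_def G2_mult_def)

lemma G2_one [simp]: "\<one>\<^bsub>G2 n1 n2 m k1 k2\<^esub> = (0, 0, 0)"
  by (simp add: G2_def)

lemma mem_G2_carrier [simp]:
  "(i, j, k) \<in> carrier (G2 n1 n2 m k1 k2) \<longleftrightarrow>
     0 \<le> i \<and> i < int m \<and> 0 \<le> j \<and> j < int n2 \<and> 0 \<le> k \<and> k < int n1"
  by (simp add: G2_def G2_carrier_def)

lemma G2_carrier_natE:
  assumes "x \<in> carrier (G2 n1 n2 m k1 k2)"
  obtains i j k where "x = (int i, int j, int k)" and "i < m" and "j < n2" and "k < n1"
  using assms by (cases x) (metis mem_G2_carrier nonneg_int_cases of_nat_less_iff)

definition G2_pos :: "nat \<Rightarrow> nat \<Rightarrow> int \<times> int \<times> int \<Rightarrow> nat" where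
  "G2_pos n1 n2 = (\<lambda>(i, j, k). nat i * (n1 * n2) + nat j * n1 + nat k)"

lemma G2_pos_G2_elem [simp]: "G2_pos n1 n2 (G2_elem n1 n2 p) = p"
proof -
  have "p = p div (n1 * n2) * (n1 * n2) + p mod (n1 * n2)"
    by (rule div_mult_mod_eq[symmetric])
  also have "p mod (n1 * n2) = p div n1 mod n2 * n1 + p mod n1"
    by (simp add: mod_mult2_eq)
  finally show ?thesis
    by (simp add: G2_pos_def G2_elem_def add.assoc)
qed

lemma G2_elem_G2_pos:
  assumes "x \<in> carrier (G2 n1 n2 m k1 k2)"
  shows "G2_elem n1 n2 (G2_pos n1 n2 x) = x"
proof -
  obtain i j k where x: "x = (int i, int j, int k)" and "j < n2" "k < n1"
    using assms by (rule G2_carrier_natE)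
  let ?p = "i * (n1 * n2) + j * n1 + k"
  have "j * n1 + k < n1 * n2"
    using \<open>j < n2\<close> \<open>k < n1\<close> by (rule mixed_radix_less)
  then have "n1 * n2 \<noteq> 0"
    by linarith
  have "?p div (n1 * n2) = (j * n1 + k + i * (n1 * n2)) div (n1 * n2)"
    by (simp add: algebra_simps)
  also have "\<dots> = i + (j * n1 + k) div (n1 * n2)"
    using \<open>n1 * n2 \<noteq> 0\<close> by (rule div_mult_self1)
  also have "\<dots> = i"
    using \<open>j * n1 + k < n1 * n2\<close> by simp
  finally have "?p div (n1 * n2) = i" .
  moreover have "?p = (i * n2 + j) * n1 + k"
    by (simp add: algebra_simps)
  then have "?p div n1 = i * n2 + j" and "?p mod n1 = k"
    using \<open>k < n1\<close> by simp_all
  ultimately show ?thesis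
    using \<open>j < n2\<close> by (simp add: x G2_pos_def G2_elem_def)
qed

lemma G2_pos_less:
  assumes "x \<in> carrier (G2 n1 n2 m k1 k2)"
  shows "G2_pos n1 n2 x < n1 * n2 * m"
proof -
  obtain i j k where x: "x = (int i, int j, int k)" and "i < m" "j < n2" "k < n1"
    using assms by (rule G2_carrier_natE)
  then have "i * (n1 * n2) + (j * n1 + k) < n1 * n2 * m"
    by (intro mixed_radix_less) (simp_all add: mixed_radix_less)
  then show ?thesis
    by (simp add: x G2_pos_def add.assoc)
qed

lemma G2_elem_in_carrier:
  assumes "p < n1 * n2 * m"
  shows "G2_elem n1 n2 p \<in> carrier (G2 n1 n2 m k1 k2)"
proof -
  have "n1 > 0" "n2 > 0"
    using assms by (auto intro: gr0I)
  then show ?thesis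
    using assms by (simp add: G2_elem_def less_mult_imp_div_less mult.commute)
qed

locale G2_params =
  fixes n1 n2 m :: nat and k1 k2 :: int
  assumes n1_pos: "n1 \<ge> 1" and n2_pos: "n2 \<ge> 1" and m_pos: "m \<ge> 1"
    and k1_order: "[k1 ^ m = 1] (mod int n1)" and k2_order: "[k2 ^ m = 1] (mod int n2)"
begin

abbreviation G :: "(int \<times> int \<times> int) monoid" where
  "G \<equiv> G2 n1 n2 m k1 k2"

lemma group_G2: "group G"
proof (rule groupI)
  show "x \<otimes>\<^bsub>G\<^esub> y \<in> carrier G" if "x \<in> carrier G" "y \<in> carrier G" for x y
    using that n1_pos n2_pos m_pos by (cases x; cases y) simp
  show "\<one>\<^bsub>G\<^esub> \<in> carrier G"
    using n1_pos n2_pos m_pos by simp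
  show "x \<otimes>\<^bsub>G\<^esub> y \<otimes>\<^bsub>G\<^esub> z = x \<otimes>\<^bsub>G\<^esub> (y \<otimes>\<^bsub>G\<^esub> z)"
    if "y \<in> carrier G" "z \<in> carrier G" for x y z
  proof -
    obtain i j k i' j' k' i'' j'' k''
      where xyz: "x = (i, j, k)" "y = (i', j', k')" "z = (i'', j'', k'')"
      by (cases x; cases y; cases z)
    then have "0 \<le> i'" "0 \<le> i''"
      using that by auto
    moreover have "((i + i') mod int m + i'') mod int m = (i + (i' + i'') mod int m) mod int m"
      by (simp add: mod_add_left_eq mod_add_right_eq add.assoc)
    ultimately show ?thesis
      by (simp only: xyz G2_mult_simp
          twisted_mult_assoc[OF k1_order] twisted_mult_assoc[OF k2_order])
  qed
  show "\<one>\<^bsub>G\<^esub> \<otimes>\<^bsub>G\<^esub> x = x" if "x \<in> carrier G" for x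
    using that by (cases x) simp
  show "\<exists>y \<in> carrier G. y \<otimes>\<^bsub>G\<^esub> x = \<one>\<^bsub>G\<^esub>" if "x \<in> carrier G" for x
  proof -
    obtain i j k where x: "x = (i, j, k)"
      by (cases x)
    have "0 \<le> i" "nat i \<le> m"
      using that x by auto
    let ?y = "((int m - i) mod int m, (- j * k2 ^ (m - nat i)) mod int n2,
               (- k * k1 ^ (m - nat i)) mod int n1)"
    have "?y \<in> carrier G"
      using n1_pos n2_pos m_pos by simp
    moreover have "?y \<otimes>\<^bsub>G\<^esub> x = \<one>\<^bsub>G\<^esub>"
      unfolding x G2_mult_simp G2_one
        twisted_mult_inverse[OF k1_order \<open>nat i \<le> m\<close>] twisted_mult_inverse[OF k2_order \<open>nat i \<le> m\<close>]
      using \<open>0 \<le> i\<close> by (simp add: mod_add_left_eq)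
    ultimately show ?thesis
      by blast
  qed
qed

lemma left_translate_in_code:
  assumes b: "b \<in> code G (G2_elem n1 n2) (n1 * n2 * m) \<alpha>"
    and u: "u \<in> carrier G" and len: "length L = n1 * n2 * m"
    and entries: "\<And>i j k. i < m \<Longrightarrow> j < n2 \<Longrightarrow> k < n1 \<Longrightarrow>
      L ! (i * (n1 * n2) + (j * n1 + k)) = b ! G2_pos n1 n2 (u \<otimes>\<^bsub>G\<^esub> (int i, int j, int k))"
  shows "L \<in> code G (G2_elem n1 n2) (n1 * n2 * m) \<alpha>"
proof -
  interpret group G
    by (rule group_G2)
  let ?N = "n1 * n2 * m"
  have "L = map (\<lambda>c. b ! G2_pos n1 n2 (u \<otimes>\<^bsub>G\<^esub> G2_elem n1 n2 c)) [0..<?N]"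
  proof (rule nth_equalityI)
    fix c assume "c < length L"
    then have "G2_elem n1 n2 c \<in> carrier G"
      using len by (simp add: G2_elem_in_carrier)
    then obtain i j k where c: "G2_elem n1 n2 c = (int i, int j, int k)" "i < m" "j < n2" "k < n1"
      by (rule G2_carrier_natE)
    have "c = i * (n1 * n2) + (j * n1 + k)"
      using G2_pos_G2_elem[of n1 n2 c] by (simp add: c G2_pos_def add.assoc)
    then have "L ! c = b ! G2_pos n1 n2 (u \<otimes>\<^bsub>G\<^esub> G2_elem n1 n2 c)"
      using entries[OF c(2-4)] unfolding c(1) by simp
    then show "L ! c = map (\<lambda>c. b ! G2_pos n1 n2 (u \<otimes>\<^bsub>G\<^esub> G2_elem n1 n2 c)) [0..<?N] ! c"
      using \<open>c < length L\<close> len by simp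
  qed (simp add: len)
  also have "\<dots> \<in> code G (G2_elem n1 n2) ?N \<alpha>"
  proof (rule code_left_translation[OF group_G2 _ _ u _ b])
    show "inj_on (G2_elem n1 n2) {..<?N}"
      by (rule inj_on_inverseI[where g = "G2_pos n1 n2"]) simp
    show "G2_elem n1 n2 ` {..<?N} \<subseteq> carrier G"
      by (auto intro: G2_elem_in_carrier)
    fix c assume "c < ?N"
    then have "u \<otimes>\<^bsub>G\<^esub> G2_elem n1 n2 c \<in> carrier G"
      using u by (simp add: G2_elem_in_carrier)
    then show "G2_pos n1 n2 (u \<otimes>\<^bsub>G\<^esub> G2_elem n1 n2 c) < ?N \<and>
        G2_elem n1 n2 (G2_pos n1 n2 (u \<otimes>\<^bsub>G\<^esub> G2_elem n1 n2 c)) = u \<otimes>\<^bsub>G\<^esub> G2_elem n1 n2 c"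
      by (simp add: G2_pos_less G2_elem_G2_pos)
  qed
  finally show ?thesis .
qed

lemma x_inv_translate_in_code:
  assumes b: "b \<in> code G (G2_elem n1 n2) (n1 * n2 * m) \<alpha>"
  shows "concat (map (\<lambda>i. concat (map (\<lambda>j. Tpow (posmod (k1 ^ i) n1)
           (take n1 (drop (i * n1 * n2 + j * n1) b))) [0..<n2])) [0..<m])
         \<in> code G (G2_elem n1 n2) (n1 * n2 * m) \<alpha>"
    (is "concat (map (\<lambda>i. concat (map (\<lambda>j. Tpow (?s i) (?block i j)) _)) _) \<in> _")
proof (rule left_translate_in_code[OF b, where u = "(0, 0, int n1 - 1)"])
  let ?L = "concat (map (\<lambda>i. concat (map (\<lambda>j. Tpow (?s i) (?block i j)) [0..<n2])) [0..<m])"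
  note block = take_drop_block[OF length_code[OF b]]
  show "length ?L = n1 * n2 * m"
    using block(1)
    by (simp add: length_concat_map_upt[where L = "n1 * n2"] length_concat_map_upt[where L = n1])
  show "(0, 0, int n1 - 1) \<in> carrier G"
    using n1_pos n2_pos m_pos by simp
  fix i j k assume ijk: "i < m" "j < n2" "k < n1"
  define k' where "k' = nat ((int k - int (?s i)) mod int n1)"
  have "k' < n1"
    using n1_pos by (simp add: k'_def nat_less_iff)
  have "?L ! (i * (n1 * n2) + (j * n1 + k)) = Tpow (?s i) (?block i j) ! k"
    using ijk block(1) mixed_radix_less[OF ijk(2,3)]
    by (simp add: nth_concat_map_upt[where L = "n1 * n2"] length_concat_map_upt[where L = n1]
        nth_concat_map_upt[where L = n1])
  also have "\<dots> = ?block i j ! k'"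
    using ijk block(1) by (simp add: nth_Tpow k'_def)
  also have "\<dots> = b ! (i * (n1 * n2) + (j * n1 + k'))"
    using block(2)[OF ijk(1,2) \<open>k' < n1\<close>] .
  also have "i * (n1 * n2) + (j * n1 + k')
      = G2_pos n1 n2 ((0, 0, int n1 - 1) \<otimes>\<^bsub>G\<^esub> (int i, int j, int k))"
    using ijk mod_diff_posmod[OF n1_pos] by (simp add: G2_pos_def k'_def)
  finally show "?L ! (i * (n1 * n2) + (j * n1 + k))
      = b ! G2_pos n1 n2 ((0, 0, int n1 - 1) \<otimes>\<^bsub>G\<^esub> (int i, int j, int k))" .
qed

lemma y_inv_translate_in_code:
  assumes b: "b \<in> code G (G2_elem n1 n2) (n1 * n2 * m) \<alpha>"
  shows "concat (map (\<lambda>i. concat (Tpow (posmod (k2 ^ i) n2)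
           (map (\<lambda>j. take n1 (drop (i * n1 * n2 + j * n1) b)) [0..<n2]))) [0..<m])
         \<in> code G (G2_elem n1 n2) (n1 * n2 * m) \<alpha>"
    (is "concat (map (\<lambda>i. concat (Tpow (?s i) (map (?block i) _))) _) \<in> _")
proof (rule left_translate_in_code[OF b, where u = "(0, int n2 - 1, 0)"])
  let ?L = "concat (map (\<lambda>i. concat (Tpow (?s i) (map (?block i) [0..<n2]))) [0..<m])"
  note block = take_drop_block[OF length_code[OF b]]
  define j' where "j' i j = nat ((int j - int (?s i)) mod int n2)" for i j
  have j'_less: "j' i j < n2" for i j
    using n2_pos by (simp add: j'_def nat_less_iff)
  have shifted: "Tpow (?s i) (map (?block i) [0..<n2]) = map (\<lambda>j. ?block i (j' i j)) [0..<n2]" for i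
    by (simp add: Tpow_map_upt j'_def)
  show "length ?L = n1 * n2 * m"
    using block(1) j'_less
    by (simp add: shifted length_concat_map_upt[where L = "n1 * n2"]
        length_concat_map_upt[where L = n1])
  show "(0, int n2 - 1, 0) \<in> carrier G"
    using n1_pos n2_pos m_pos by simp
  fix i j k assume ijk: "i < m" "j < n2" "k < n1"
  have "?L ! (i * (n1 * n2) + (j * n1 + k)) = ?block i (j' i j) ! k"
    using ijk block(1) mixed_radix_less[OF ijk(2,3)] j'_less
    by (simp add: shifted nth_concat_map_upt[where L = "n1 * n2"]
        length_concat_map_upt[where L = n1] nth_concat_map_upt[where L = n1])
  also have "\<dots> = b ! (i * (n1 * n2) + (j' i j * n1 + k))"
    using block(2)[OF ijk(1) j'_less ijk(3)] .
  also have "i * (n1 * n2) + (j' i j * n1 + k)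
      = G2_pos n1 n2 ((0, int n2 - 1, 0) \<otimes>\<^bsub>G\<^esub> (int i, int j, int k))"
    using ijk mod_diff_posmod[OF n2_pos] by (simp add: G2_pos_def j'_def)
  finally show "?L ! (i * (n1 * n2) + (j * n1 + k))
      = b ! G2_pos n1 n2 ((0, int n2 - 1, 0) \<otimes>\<^bsub>G\<^esub> (int i, int j, int k))" .
qed

lemma z_inv_translate_in_code:
  assumes b: "b \<in> code G (G2_elem n1 n2) (n1 * n2 * m) \<alpha>"
  shows "concat (T (map (\<lambda>i. take (n1 * n2) (drop (n1 * n2 * i) b)) [0..<m]))
         \<in> code G (G2_elem n1 n2) (n1 * n2 * m) \<alpha>"
    (is "concat (T (map ?layer _)) \<in> _")
proof (rule left_translate_in_code[OF b, where u = "(int m - 1, 0, 0)"])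
  let ?L = "concat (T (map ?layer [0..<m]))"
  define i' where "i' i = nat ((int i - 1) mod int m)" for i
  have i'_less: "i' i < m" for i
    using m_pos by (simp add: i'_def nat_less_iff)
  have shifted: "T (map ?layer [0..<m]) = map (\<lambda>i. ?layer (i' i)) [0..<m]"
    by (simp add: T_eq_Tpow_1 Tpow_map_upt i'_def)
  have layer_end: "n1 * n2 * i + n1 * n2 \<le> length b" if "i < m" for i
    using that mult_le_mono1[of "Suc i" m "n1 * n2"] length_code[OF b] by (simp add: mult.commute)
  have layer_len: "length (?layer i) = n1 * n2" if "i < m" for i
    using layer_end[OF that] by simp
  show "length ?L = n1 * n2 * m"
    using layer_len i'_less by (simp add: shifted length_concat_map_upt[where L = "n1 * n2"])
  show "(int m - 1, 0, 0) \<in> carrier G"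
    using n1_pos n2_pos m_pos by simp
  fix i j k assume ijk: "i < m" "j < n2" "k < n1"
  have "?L ! (i * (n1 * n2) + (j * n1 + k)) = ?layer (i' i) ! (j * n1 + k)"
    using ijk layer_len mixed_radix_less[OF ijk(2,3)] i'_less
    by (simp add: shifted nth_concat_map_upt[where L = "n1 * n2"])
  also have "\<dots> = b ! (i' i * (n1 * n2) + (j * n1 + k))"
  proof -
    have "n1 * n2 * i' i \<le> length b"
      using layer_end[OF i'_less[of i]] by linarith
    then show ?thesis
      using mixed_radix_less[OF ijk(2,3)] by (simp add: mult.commute)
  qed
  also have "i' i * (n1 * n2) + (j * n1 + k)
      = G2_pos n1 n2 ((int m - 1, 0, 0) \<otimes>\<^bsub>G\<^esub> (int i, int j, int k))"
    using ijk mod_add_self2[of "int i - 1" "int m"] by (simp add: G2_pos_def i'_def algebra_simps)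
  finally show "?L ! (i * (n1 * n2) + (j * n1 + k))
      = b ! G2_pos n1 n2 ((int m - 1, 0, 0) \<otimes>\<^bsub>G\<^esub> (int i, int j, int k))" .
qed

end

theorem theorem3p2:
  fixes n1 n2 m :: nat and k1 k2 :: int
    and alpha :: "int \<times> int \<times> int \<Rightarrow> 'a::{field, finite}"
    and b :: "'a list"
  assumes "n1 \<ge> 1" and "n2 \<ge> 1" and "m \<ge> 1"
    and "[k1 ^ m = 1] (mod int n1)" and "[k2 ^ m = 1] (mod int n2)"
    and "\<forall>t. 1 \<le> t \<and> t \<le> m - 1 \<longrightarrow> \<not> [k1 ^ t = 1] (mod int n1)"
    and "\<forall>t. 1 \<le> t \<and> t \<le> m - 1 \<longrightarrow> \<not> [k2 ^ t = 1] (mod int n2)"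
    and "b \<in> code (G2 n1 n2 m k1 k2) (G2_elem n1 n2) (n1 * n2 * m) alpha"
  shows
    "let
       bp = (\<lambda>i j. take n1 (drop (i * n1 * n2 + j * n1) b));
       bb = (\<lambda>i j. Tpow (posmod (k1 ^ i) n1) (bp i j));
       bt = (\<lambda>i. concat (map (bb i) [0..<n2]));
       btp = (\<lambda>i. concat (Tpow (posmod (k2 ^ i) n2) (map (bp i) [0..<n2])));
       btpp = (\<lambda>i. take (n1 * n2) (drop (n1 * n2 * i) b));
       C = code (G2 n1 n2 m k1 k2) (G2_elem n1 n2) (n1 * n2 * m) alpha
     in concat (map bt [0..<m]) \<in> C
      \<and> concat (map btp [0..<m]) \<in> C
      \<and> concat (T (map btpp [0..<m])) \<in> C"
proof -
  interpret G2_params n1 n2 m k1 k2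
    using assms(1-5) by unfold_locales
  show ?thesis
    unfolding Let_def
    using x_inv_translate_in_code[OF assms(8)] y_inv_translate_in_code[OF assms(8)]
      z_inv_translate_in_code[OF assms(8)]
    by blast
qed

end
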